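(* Let $\xi:I\to\mathbb{R}^3$ be as in the context with $k>0$ and $\tau\ne0$ on the open interval $I$, and let $e$ be its evolute. Then there exists an orientation-preserving isometry $M$ of $\mathbb{R}^3$ with $M(\xi(t))=e(t)$ for all $t\in I$ if and only if $k=|\tau|$ on $I$ and either (a) $k$ is constant on $I$ (a helix with equal curvature and absolute torsion), or (b) there exist $c>0$ and $t_0\notin I$ such that $k(t)=c\,|t-t_0|^{-1/2}$ for all $t\in I$. (The case $\tau>0$ is the curves with $k=\tau$; the case $\tau<0$ is their mirror images.)
   Context: $\xi$ is a smooth arclength-parametrized curve with curvature $k>0$, $r=1/k$, torsion $\tau$ and Frenet frame $(\mathbf{t},\mathbf{n},\mathbf{b})$. Its evolute is the curve $e(t)=\xi(t)+r(t)\mathbf{n}(t)+\frac{r'(t)}{\tau(t)}\mathbf{b}(t)$, the locus of centers of osculating spheres, parametrized by the same parameter $t$. *)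

theory Defs
  imports "HOL-Analysis.Analysis"
begin

type_synonym vec3 = "real^3"

definition smooth_on :: "real set \<Rightarrow> (real \<Rightarrow> vec3) \<Rightarrow> bool" where
  "smooth_on I f \<longleftrightarrow> (\<exists>D :: nat \<Rightarrow> real \<Rightarrow> vec3. D 0 = f \<and>
     (\<forall>m. \<forall>t\<in>I. (D m has_vector_derivative D (Suc m) t) (at t)))"

definition vd :: "(real \<Rightarrow> vec3) \<Rightarrow> real \<Rightarrow> vec3" where
  "vd f t = vector_derivative f (at t)"

definition tangent :: "(real \<Rightarrow> vec3) \<Rightarrow> real \<Rightarrow> vec3" where
  "tangent \<xi> t = vd \<xi> t"

definition curvature :: "(real \<Rightarrow> vec3) \<Rightarrow> real \<Rightarrow> real" where
  "curvature \<xi> t = norm (vd (vd \<xi>) t)"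

definition normal :: "(real \<Rightarrow> vec3) \<Rightarrow> real \<Rightarrow> vec3" where
  "normal \<xi> t = (1 / curvature \<xi> t) *\<^sub>R vd (vd \<xi>) t"

definition binormal :: "(real \<Rightarrow> vec3) \<Rightarrow> real \<Rightarrow> vec3" where
  "binormal \<xi> t = cross3 (tangent \<xi> t) (normal \<xi> t)"

text \<open>Torsion with the Frenet convention b' = - tau n.\<close>
definition torsion :: "(real \<Rightarrow> vec3) \<Rightarrow> real \<Rightarrow> real" where
  "torsion \<xi> t = - (vd (binormal \<xi>) t \<bullet> normal \<xi> t)"

definition evolute :: "(real \<Rightarrow> vec3) \<Rightarrow> real \<Rightarrow> vec3" where
  "evolute \<xi> t = \<xi> t + (1 / curvature \<xi> t) *\<^sub>R normal \<xi> t
     + (deriv (\<lambda>s. 1 / curvature \<xi> s) t / torsion \<xi> t) *\<^sub>R binormal \<xi> t"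

end

theory Submission
  imports Defs
begin

text \<open>Along the curve the evolute e = \<xi> + r N + g B, with r = 1/k and g = r'/\<tau>, moves in the
  binormal direction: e' = (r\<tau> + g') B. A rotation A with A \<xi> + c = e therefore maps T to
  \<plusminus>B, and this sign \<sigma> is constant. Differentiating A T = \<sigma> B twice with the Frenet equations
  forces \<tau> = \<sigma> k, and then g' = 0, i.e. r r' is constant, i.e. r^2 is affine in t; this is the
  stated alternative for k. Conversely, if \<tau> = \<epsilon> k with \<epsilon> = \<plusminus>1 and r r' is constant, then
  e' = \<epsilon> B and (\<epsilon> B, -N, \<epsilon> T) solves the same Frenet equations as (T, N, B); by uniqueness
  for these equations the rotation matching the two frames at one point matches them
  everywhere, so A T = e' and A \<xi> - e is constant.\<close>

unbundle cross3_syntax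

lemma has_vector_derivative_cross:
  fixes f g :: "real \<Rightarrow> real^3"
  assumes "(f has_vector_derivative f') (at x within S)" "(g has_vector_derivative g') (at x within S)"
  shows "((\<lambda>s. f s \<times> g s) has_vector_derivative (f x \<times> g' + f' \<times> g x)) (at x within S)"
  using bilinear_cross bilinear_conv_bounded_bilinear bounded_bilinear.has_vector_derivative assms
  by blast

lemma has_real_derivative_inner:
  fixes f g :: "real \<Rightarrow> 'a::real_inner"
  assumes "(f has_vector_derivative f') (at x within S)" "(g has_vector_derivative g') (at x within S)"
  shows "((\<lambda>s. f s \<bullet> g s) has_real_derivative (f x \<bullet> g' + f' \<bullet> g x)) (at x within S)"
  using bounded_bilinear.has_vector_derivative[OF bounded_bilinear_inner assms]
  by (simp add: has_real_derivative_iff_has_vector_derivative)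

lemma has_real_derivative_norm:
  fixes f :: "real \<Rightarrow> 'a::real_inner"
  assumes "(f has_vector_derivative f') (at x)" "f x \<noteq> 0"
  shows "((\<lambda>s. norm (f s)) has_real_derivative (f x \<bullet> f') / norm (f x)) (at x)"
proof -
  have "((\<lambda>s. sqrt (f s \<bullet> f s)) has_real_derivative
          inverse (sqrt (f x \<bullet> f x)) / 2 * (f x \<bullet> f' + f' \<bullet> f x)) (at x)"
    using assms by (intro DERIV_chain2[OF DERIV_real_sqrt has_real_derivative_inner]) auto
  then show ?thesis
    by (simp add: norm_eq_sqrt_inner inner_commute field_simps)
qed

lemma has_vector_derivative_unique_on_open:
  assumes "open S" "x \<in> S" "\<And>s. s \<in> S \<Longrightarrow> f s = g s"
    and "(f has_vector_derivative f') (at x)" "(g has_vector_derivative g') (at x)"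
  shows "f' = g'"
  using has_vector_derivative_transform_within_open[OF assms(4,1,2,3)] assms(5)
  by (rule vector_derivative_unique_at)

lemma affine_iff_constant_derivative:
  fixes f f' :: "real \<Rightarrow> real"
  assumes "open I" "is_interval I" "\<And>t. t \<in> I \<Longrightarrow> (f has_real_derivative f' t) (at t)"
  shows "(\<exists>C. \<forall>t\<in>I. f' t = C) \<longleftrightarrow> (\<exists>a b. \<forall>t\<in>I. f t = a * t + b)"
proof
  assume "\<exists>C. \<forall>t\<in>I. f' t = C"
  then obtain C where C: "\<forall>t\<in>I. f' t = C" ..
  have "((\<lambda>t. f t - C * t) has_real_derivative 0) (at t within I)" if "t \<in> I" for t
  proof -
    have "((\<lambda>t. f t - C * t) has_real_derivative f' t - C) (at t)"
      by (auto intro!: derivative_eq_intros assms(3)[OF that])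
    then show ?thesis
      using C that by (simp add: has_field_derivative_at_within)
  qed
  then obtain b where "\<forall>t\<in>I. f t - C * t = b"
    using has_field_derivative_zero_constant[of I] assms(2) is_interval_convex_1 by blast
  then have "\<forall>t\<in>I. f t = C * t + b"
    by (simp add: diff_eq_eq add.commute)
  then show "\<exists>a b. \<forall>t\<in>I. f t = a * t + b"
    by blast
next
  assume "\<exists>a b. \<forall>t\<in>I. f t = a * t + b"
  then obtain a b where ab: "\<forall>t\<in>I. f t = a * t + b" by blast
  have "f' t = a" if "t \<in> I" for t
  proof (rule DERIV_unique[OF assms(3)[OF that]])
    show "(f has_real_derivative a) (at t)"
      by (rule has_field_derivative_transform_within_open[OF _ assms(1) that, of "\<lambda>t. a * t + b"])
        (auto intro!: derivative_eq_intros simp: ab)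
  qed
  then show "\<exists>C. \<forall>t\<in>I. f' t = C" by blast
qed

lemma continuous_on_nonzero_sign_const:
  fixes f :: "real \<Rightarrow> real"
  assumes "continuous_on I f" "is_interval I" "\<forall>t\<in>I. f t \<noteq> 0"
  shows "(\<forall>t\<in>I. f t > 0) \<or> (\<forall>t\<in>I. f t < 0)"
proof (rule ccontr)
  assume "\<not> ?thesis"
  then obtain a b where "a \<in> I" "b \<in> I" "f a < 0" "0 < f b"
    using assms(3) by (meson linorder_neqE_linordered_idom)
  moreover have "is_interval (f ` I)"
    using connected_continuous_image[OF assms(1)] assms(2) by (simp add: is_interval_connected_1)
  ultimately have "0 \<in> f ` I"
    unfolding is_interval_1 by (meson imageI less_imp_le)
  then show False using assms(3) by auto
qed

lemma continuous_on_unit_valued_const: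
  fixes f :: "real \<Rightarrow> real"
  assumes "continuous_on I f" "is_interval I" "\<forall>t\<in>I. \<bar>f t\<bar> = 1"
  obtains \<sigma> where "\<bar>\<sigma>\<bar> = 1" "\<forall>t\<in>I. f t = \<sigma>"
proof -
  have "\<forall>t\<in>I. f t \<noteq> 0" using assms(3) by force
  from continuous_on_nonzero_sign_const[OF assms(1,2) this] show ?thesis
  proof
    assume "\<forall>t\<in>I. f t > 0"
    then show ?thesis using assms(3) that[of 1] by (simp add: abs_of_pos)
  next
    assume "\<forall>t\<in>I. f t < 0"
    then show ?thesis using assms(3) that[of "-1"] by (simp add: abs_of_neg)
  qed
qed

lemma mult_self_eq_1_if_abs_eq_1: "\<bar>x\<bar> = 1 \<Longrightarrow> x * x = (1 :: 'a::linordered_idom)"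
  by (metis abs_mult_self_eq mult_1)

lemma unit_vectors_eq_if_inner_one:
  fixes x y :: "'a::real_inner"
  assumes "norm x = 1" "norm y = 1" "x \<bullet> y = 1"
  shows "x = y"
proof -
  have "(x - y) \<bullet> (x - y) = 0"
    using assms by (simp add: inner_diff_left inner_diff_right inner_commute norm_eq_1)
  then show ?thesis by simp
qed

lemma orthogonal_matrix_inner:
  assumes "orthogonal_matrix (A :: real^'n^'n)"
  shows "(A *v x) \<bullet> (A *v y) = x \<bullet> y"
  using assms orthogonal_transformation_matrix[of "(*v) A"]
  by (simp add: orthogonal_transformation_def matrix_vector_mul_linear)

lemma orthogonal_matrix_norm:
  assumes "orthogonal_matrix (A :: real^'n^'n)"
  shows "norm (A *v x) = norm x"
  using orthogonal_matrix_inner[OF assms] by (simp add: norm_eq_sqrt_inner)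

lemma has_vector_derivative_matrix_vector_mult:
  fixes A :: "real^'n^'m"
  shows "(f has_vector_derivative f') F \<Longrightarrow> ((\<lambda>s. A *v f s) has_vector_derivative A *v f') F"
  by (rule bounded_linear.has_vector_derivative[OF matrix_vector_mul_bounded_linear])

lemma matrix_vector_mult_minus: "A *v (- x) = - (A *v x)"
  for A :: "'a::comm_ring_1^'n^'m"
  by (simp add: vec_eq_iff matrix_vector_mult_def sum_negf)

lemmas has_vector_derivative_const_scaleR =
  bounded_linear.has_vector_derivative[OF bounded_linear_scaleR_right]

lemma orthonormal_cross_unit:
  fixes u v :: "real^3"
  assumes "u \<bullet> u = 1" "v \<bullet> v = 1" "u \<bullet> v = 0"
  shows "(u \<times> v) \<bullet> (u \<times> v) = 1"
proof -
  have "(norm (u \<times> v))\<^sup>2 = 1"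
    using norm_cross_dot[of u v] assms by (simp add: norm_eq_sqrt_inner)
  then show ?thesis by (simp add: power2_norm_eq_inner)
qed

lemma orthonormal_expansion3:
  fixes u v x :: "real^3"
  assumes "u \<bullet> u = 1" "v \<bullet> v = 1" "u \<bullet> v = 0"
  shows "x = (x \<bullet> u) *\<^sub>R u + (x \<bullet> v) *\<^sub>R v + (x \<bullet> (u \<times> v)) *\<^sub>R (u \<times> v)"
proof -
  define w where "w = u \<times> v"
  define y where "y = x - (x \<bullet> u) *\<^sub>R u - (x \<bullet> v) *\<^sub>R v"
  have "y \<bullet> u = 0" "y \<bullet> v = 0"
    using assms by (auto simp: y_def algebra_simps inner_commute)
  then have "w \<times> (y \<times> w) = 0"
    unfolding w_def Lagrange by simp
  moreover have "w \<bullet> w = 1"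
    unfolding w_def by (rule orthonormal_cross_unit[OF assms])
  ultimately have "y = (w \<bullet> y) *\<^sub>R w"
    by (simp add: Lagrange)
  moreover have "w \<bullet> y = x \<bullet> w"
    by (simp add: y_def w_def inner_diff_right dot_cross_self inner_commute)
  ultimately show ?thesis
    by (simp add: y_def w_def algebra_simps)
qed

lemma rotation_matrix_map_orthonormal_pair:
  fixes u v u' v' :: "real^3"
  assumes "u \<bullet> u = 1" "v \<bullet> v = 1" "u \<bullet> v = 0"
    and "u' \<bullet> u' = 1" "v' \<bullet> v' = 1" "u' \<bullet> v' = 0"
  obtains A where "rotation_matrix A" "A *v u = u'" "A *v v = v'" "A *v (u \<times> v) = u' \<times> v'"
proof -
  define w where "w = u \<times> v"
  define w' where "w' = u' \<times> v'"
  have unit_w: "w \<bullet> w = 1" "w' \<bullet> w' = 1"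
    unfolding w_def w'_def using assms by (simp_all add: orthonormal_cross_unit)
  have orth_w: "u \<bullet> w = 0" "v \<bullet> w = 0" "u' \<bullet> w' = 0" "v' \<bullet> w' = 0"
    by (simp_all add: w_def w'_def dot_cross_self)
  define f where "f x = (x \<bullet> u) *\<^sub>R u' + (x \<bullet> v) *\<^sub>R v' + (x \<bullet> w) *\<^sub>R w'" for x
  have "linear f"
    by (rule linearI) (simp_all add: f_def inner_add_left scaleR_add_left scaleR_add_right)
  have "f x \<bullet> f y = x \<bullet> y" for x y
  proof -
    have "x \<bullet> y = ((x \<bullet> u) *\<^sub>R u + (x \<bullet> v) *\<^sub>R v + (x \<bullet> w) *\<^sub>R w)
                   \<bullet> ((y \<bullet> u) *\<^sub>R u + (y \<bullet> v) *\<^sub>R v + (y \<bullet> w) *\<^sub>R w)"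
      using orthonormal_expansion3[OF assms(1-3)] by (simp add: w_def[symmetric])
    also have "\<dots> = f x \<bullet> f y"
      using assms unit_w orth_w by (simp add: f_def inner_add_left inner_add_right inner_commute)
    finally show ?thesis by simp
  qed
  with \<open>linear f\<close> have "orthogonal_matrix (matrix f)"
    using orthogonal_transformation_matrix by (auto simp: orthogonal_transformation_def)
  moreover have f_frame: "f u = u'" "f v = v'" "f w = w'"
    using assms unit_w orth_w by (simp_all add: f_def inner_commute)
  moreover have Af: "matrix f *v x = f x" for x
    using \<open>linear f\<close> by (simp add: matrix_works)
  ultimately have "w' = det (matrix f) *\<^sub>R w'"
    using cross_orthogonal_matrix[of "matrix f" u v] by (simp add: w_def w'_def)
  then have "det (matrix f) = 1"
    using unit_w(2) by (metis inner_zero_left scaleR_cancel_right scaleR_one zero_neq_one)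
  with \<open>orthogonal_matrix (matrix f)\<close> have "rotation_matrix (matrix f)"
    by (simp add: rotation_matrix_def)
  then show ?thesis
    using that f_frame by (simp add: Af w_def w'_def)
qed

section \<open>Frenet frames\<close>

text \<open>Only unit length is required of the three fields, not orthogonality: this is all the
  uniqueness argument below needs.\<close>
definition frenet_frame_on ::
    "real set \<Rightarrow> (real \<Rightarrow> real) \<Rightarrow> (real \<Rightarrow> real) \<Rightarrow>
     (real \<Rightarrow> real^3) \<Rightarrow> (real \<Rightarrow> real^3) \<Rightarrow> (real \<Rightarrow> real^3) \<Rightarrow> bool" where
  "frenet_frame_on I k \<tau> T N B \<longleftrightarrow> (\<forall>t\<in>I.
     norm (T t) = 1 \<and> norm (N t) = 1 \<and> norm (B t) = 1 \<and>
     (T has_vector_derivative k t *\<^sub>R N t) (at t) \<and>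
     (N has_vector_derivative (- k t) *\<^sub>R T t + \<tau> t *\<^sub>R B t) (at t) \<and>
     (B has_vector_derivative (- \<tau> t) *\<^sub>R N t) (at t))"

lemma frenet_frame_on_orthogonal_image:
  assumes "orthogonal_matrix A" "frenet_frame_on I k \<tau> T N B"
  shows "frenet_frame_on I k \<tau> (\<lambda>s. A *v T s) (\<lambda>s. A *v N s) (\<lambda>s. A *v B s)"
  unfolding frenet_frame_on_def
proof
  fix t assume "t \<in> I"
  show "norm (A *v T t) = 1 \<and> norm (A *v N t) = 1 \<and> norm (A *v B t) = 1 \<and>
     ((\<lambda>s. A *v T s) has_vector_derivative k t *\<^sub>R (A *v N t)) (at t) \<and>
     ((\<lambda>s. A *v N s) has_vector_derivative (- k t) *\<^sub>R (A *v T t) + \<tau> t *\<^sub>R (A *v B t)) (at t) \<and>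
     ((\<lambda>s. A *v B s) has_vector_derivative (- \<tau> t) *\<^sub>R (A *v N t)) (at t)"
  proof -
    from assms(2) \<open>t \<in> I\<close> have "norm (T t) = 1" "norm (N t) = 1" "norm (B t) = 1"
      and dT: "(T has_vector_derivative k t *\<^sub>R N t) (at t)"
      and dN: "(N has_vector_derivative (- k t) *\<^sub>R T t + \<tau> t *\<^sub>R B t) (at t)"
      and dB: "(B has_vector_derivative (- \<tau> t) *\<^sub>R N t) (at t)"
      by (auto simp: frenet_frame_on_def)
    then show ?thesis
      using has_vector_derivative_matrix_vector_mult[where A = A, OF dT]
        has_vector_derivative_matrix_vector_mult[where A = A, OF dN]
        has_vector_derivative_matrix_vector_mult[where A = A, OF dB]
      by (simp add: orthogonal_matrix_norm[OF assms(1)] matrix_vector_right_distrib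
          matrix_vector_mult_diff_distrib matrix_vector_mult_scaleR matrix_vector_mult_minus)
  qed
qed

text \<open>The sum of the three inner products of corresponding fields is constant by the Frenet
  equations, and it equals 3 exactly where the frames coincide.\<close>
lemma frenet_frame_on_unique:
  assumes F: "frenet_frame_on I k \<tau> T N B" and F': "frenet_frame_on I k \<tau> T' N' B'"
    and "convex I" "t0 \<in> I" "T t0 = T' t0" "N t0 = N' t0" "B t0 = B' t0" "t \<in> I"
  shows "T t = T' t \<and> N t = N' t \<and> B t = B' t"
proof -
  define h where "h s = T s \<bullet> T' s + N s \<bullet> N' s + B s \<bullet> B' s" for s
  have "(h has_real_derivative 0) (at s within I)" if s: "s \<in> I" for s
  proof -
    have "(h has_real_derivative
            (T s \<bullet> (k s *\<^sub>R N' s) + (k s *\<^sub>R N s) \<bullet> T' s)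
          + (N s \<bullet> ((- k s) *\<^sub>R T' s + \<tau> s *\<^sub>R B' s) + ((- k s) *\<^sub>R T s + \<tau> s *\<^sub>R B s) \<bullet> N' s)
          + (B s \<bullet> ((- \<tau> s) *\<^sub>R N' s) + ((- \<tau> s) *\<^sub>R N s) \<bullet> B' s)) (at s)"
      using F F' s unfolding frenet_frame_on_def h_def
      by (intro DERIV_add has_real_derivative_inner) auto
    then show ?thesis
      by (auto simp: inner_add_left inner_add_right inner_commute algebra_simps
          intro: has_field_derivative_at_within)
  qed
  then obtain h0 where "\<forall>s\<in>I. h s = h0"
    using has_field_derivative_zero_constant[OF \<open>convex I\<close>] by blast
  moreover have "h t0 = 3"
    using F \<open>t0 \<in> I\<close> assms(5-7)[symmetric] by (simp add: h_def frenet_frame_on_def norm_eq_1)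
  ultimately have "h t = 3" using assms(4,8) by simp
  moreover have unit: "norm (T t) = 1" "norm (N t) = 1" "norm (B t) = 1"
      "norm (T' t) = 1" "norm (N' t) = 1" "norm (B' t) = 1"
    using F F' \<open>t \<in> I\<close> by (auto simp: frenet_frame_on_def)
  moreover have "T t \<bullet> T' t \<le> 1" "N t \<bullet> N' t \<le> 1" "B t \<bullet> B' t \<le> 1"
    using unit norm_cauchy_schwarz by (metis mult_1)+
  ultimately have "T t \<bullet> T' t = 1" "N t \<bullet> N' t = 1" "B t \<bullet> B' t = 1"
    unfolding h_def by linarith+
  then show ?thesis
    using unit unit_vectors_eq_if_inner_one by blast
qed

section \<open>The evolute of a unit-speed curve\<close>

locale frenet_curve =
  fixes \<xi> :: "real \<Rightarrow> real^3" and I :: "real set" and D :: "nat \<Rightarrow> real \<Rightarrow> real^3"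
  assumes open_I: "open I" and interval_I: "is_interval I"
    and D0: "D 0 = \<xi>"
    and D_deriv: "\<And>m t. t \<in> I \<Longrightarrow> (D m has_vector_derivative D (Suc m) t) (at t)"
    and unit_speed: "\<And>t. t \<in> I \<Longrightarrow> norm (vd \<xi> t) = 1"
    and curvature_pos: "\<And>t. t \<in> I \<Longrightarrow> curvature \<xi> t > 0"
begin

definition "k s = norm (D 2 s)"
definition "k' s = (D 2 s \<bullet> D 3 s) / k s"
definition "r s = 1 / k s"
definition "r' s = - k' s / (k s)\<^sup>2"
definition "T = D 1"
definition "N s = r s *\<^sub>R D 2 s"
definition "N' s = r s *\<^sub>R D 3 s + r' s *\<^sub>R D 2 s"
definition "B s = T s \<times> N s"
definition "tau s = B s \<bullet> N' s"

lemma convex_I: "convex I"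
  using interval_I by (simp add: is_interval_convex_1)

lemma xi_deriv: "t \<in> I \<Longrightarrow> (\<xi> has_vector_derivative T t) (at t)"
  using D_deriv[of t 0] by (simp add: D0 T_def)

lemma T_deriv_D2: "t \<in> I \<Longrightarrow> (T has_vector_derivative D 2 t) (at t)"
  using D_deriv[of t 1] by (simp add: T_def numeral_2_eq_2)

lemma D2_deriv: "t \<in> I \<Longrightarrow> (D 2 has_vector_derivative D 3 t) (at t)"
  using D_deriv[of t 2] by (simp add: numeral_3_eq_3 numeral_2_eq_2)

lemma vd_xi: "t \<in> I \<Longrightarrow> vd \<xi> t = T t"
  by (simp add: vd_def xi_deriv vector_derivative_at)

lemma vd_vd_xi: "vd (vd \<xi>) t = D 2 t" if "t \<in> I"
proof -
  have "(vd \<xi> has_vector_derivative D 2 t) (at t)"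
    using has_vector_derivative_transform_within_open[OF T_deriv_D2[OF that] open_I that]
    by (simp add: vd_xi)
  then show ?thesis by (simp add: vd_def vector_derivative_at)
qed

lemma curvature_eq: "t \<in> I \<Longrightarrow> curvature \<xi> t = k t"
  by (simp add: curvature_def vd_vd_xi k_def)

lemma k_pos: "t \<in> I \<Longrightarrow> k t > 0"
  using curvature_pos curvature_eq by simp

lemma k_deriv: "t \<in> I \<Longrightarrow> (k has_real_derivative k' t) (at t)"
  using has_real_derivative_norm[OF D2_deriv] k_pos
  by (simp add: k_def[abs_def] k'_def)

lemma r_deriv: "t \<in> I \<Longrightarrow> (r has_real_derivative r' t) (at t)"
  unfolding r_def[abs_def] r'_def using k_pos[of t]
  by (auto intro!: derivative_eq_intros k_deriv simp: power2_eq_square)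

lemma N_deriv_N': "t \<in> I \<Longrightarrow> (N has_vector_derivative N' t) (at t)"
  unfolding N_def[abs_def] N'_def
  using has_vector_derivative_scaleR[OF r_deriv D2_deriv] by (simp add: add.commute)

lemma T_deriv: "t \<in> I \<Longrightarrow> (T has_vector_derivative k t *\<^sub>R N t) (at t)"
  using T_deriv_D2[of t] k_pos[of t] by (simp add: N_def r_def)

lemma normal_eq: "t \<in> I \<Longrightarrow> normal \<xi> t = N t"
  by (simp add: normal_def curvature_eq vd_vd_xi N_def r_def)

lemma binormal_eq: "t \<in> I \<Longrightarrow> binormal \<xi> t = B t"
  by (simp add: binormal_def tangent_def vd_xi normal_eq B_def)

lemma T_unit: "t \<in> I \<Longrightarrow> T t \<bullet> T t = 1"
  using unit_speed[of t] by (simp add: vd_xi norm_eq_1)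

lemma N_unit: "t \<in> I \<Longrightarrow> N t \<bullet> N t = 1"
  using k_pos[of t]
  by (simp add: N_def r_def k_def power2_norm_eq_inner[symmetric] power2_eq_square)

lemma inner_const_imp_deriv_zero:
  assumes "t \<in> I" "\<And>s. s \<in> I \<Longrightarrow> f s \<bullet> g s = c"
    and "(f has_vector_derivative f') (at t)" "(g has_vector_derivative g') (at t)"
  shows "f t \<bullet> g' + f' \<bullet> g t = 0"
  using has_field_derivative_transform_within_open[OF has_real_derivative_inner[OF assms(3,4)]
      open_I assms(1,2)] DERIV_const DERIV_unique by blast

lemma T_orth_N: "t \<in> I \<Longrightarrow> T t \<bullet> N t = 0"
  using inner_const_imp_deriv_zero[OF _ T_unit T_deriv_D2 T_deriv_D2] by (simp add: N_def inner_commute)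

lemma N_orth_N': "t \<in> I \<Longrightarrow> N t \<bullet> N' t = 0"
  using inner_const_imp_deriv_zero[OF _ N_unit N_deriv_N' N_deriv_N'] by (simp add: inner_commute)

lemma T_inner_N': "T t \<bullet> N' t = - k t" if "t \<in> I"
  using inner_const_imp_deriv_zero[OF that T_orth_N T_deriv[OF that] N_deriv_N'[OF that]] N_unit[OF that]
  by simp

lemma B_unit: "t \<in> I \<Longrightarrow> B t \<bullet> B t = 1"
  by (simp add: B_def orthonormal_cross_unit T_unit N_unit T_orth_N)

lemma N_orth_B: "N t \<bullet> B t = 0"
  by (simp add: B_def dot_cross_self)

lemma N'_eq: "N' t = (- k t) *\<^sub>R T t + tau t *\<^sub>R B t" if "t \<in> I"
  using orthonormal_expansion3[OF T_unit N_unit T_orth_N, OF that that that, of "N' t"]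
    T_inner_N'[OF that] N_orth_N'[OF that]
  by (simp add: inner_commute B_def tau_def)

lemma N_deriv: "t \<in> I \<Longrightarrow> (N has_vector_derivative (- k t) *\<^sub>R T t + tau t *\<^sub>R B t) (at t)"
  using N_deriv_N' N'_eq by simp

lemma B_deriv: "t \<in> I \<Longrightarrow> (B has_vector_derivative (- tau t) *\<^sub>R N t) (at t)"
  using has_vector_derivative_cross[OF T_deriv N_deriv_N', of t]
  by (simp add: B_def[abs_def] N'_eq cross_add_right cross_mult_right cross_mult_left B_def
      Cross3.right_diff_distrib Lagrange T_unit T_orth_N)

lemma frenet_frame: "frenet_frame_on I k tau T N B"
  using T_unit N_unit B_unit T_deriv N_deriv B_deriv
  by (simp add: frenet_frame_on_def norm_eq_1)

lemma B_cross_N: "B t \<times> N t = - T t" if "t \<in> I"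
  using T_orth_N[OF that] N_unit[OF that]
  by (simp add: B_def cross_skew[of _ "N t"] Lagrange inner_commute)

lemma torsion_eq: "t \<in> I \<Longrightarrow> torsion \<xi> t = tau t"
proof -
  assume t: "t \<in> I"
  have "(binormal \<xi> has_vector_derivative (- tau t) *\<^sub>R N t) (at t)"
    using has_vector_derivative_transform_within_open[OF B_deriv[OF t] open_I t]
    by (simp add: binormal_eq)
  then show ?thesis
    using t by (simp add: torsion_def vd_def vector_derivative_at normal_eq N_unit)
qed

lemma deriv_inverse_curvature: "t \<in> I \<Longrightarrow> deriv (\<lambda>s. 1 / curvature \<xi> s) t = r' t"
  using has_field_derivative_transform_within_open[OF r_deriv open_I, of t "\<lambda>s. 1 / curvature \<xi> s"]
  by (simp add: curvature_eq r_def DERIV_imp_deriv)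

lemma evolute_eq: "t \<in> I \<Longrightarrow> evolute \<xi> t = \<xi> t + r t *\<^sub>R N t + (r' t / tau t) *\<^sub>R B t"
  by (simp add: evolute_def curvature_eq normal_eq binormal_eq torsion_eq deriv_inverse_curvature r_def)

lemma continuous_on_D: "continuous_on I (D m)"
  using D_deriv open_I
  by (intro continuous_at_imp_continuous_on ballI has_vector_derivative_continuous) blast

lemma continuous_on_k: "continuous_on I k"
  unfolding k_def[abs_def] by (intro continuous_intros continuous_on_D)

lemma continuous_on_r: "continuous_on I r"
  unfolding r_def[abs_def] using k_pos by (intro continuous_intros continuous_on_k) force

lemma continuous_on_B: "continuous_on I B"
  unfolding B_def[abs_def] N_def T_def
  by (intro continuous_intros continuous_on_cross continuous_on_D continuous_on_r)

lemma continuous_on_tau: "continuous_on I tau"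
proof -
  have "continuous_on I r'"
    unfolding r'_def[abs_def] k'_def using k_pos
    by (intro continuous_intros continuous_on_D continuous_on_k) force+
  then show ?thesis
    unfolding tau_def[abs_def] N'_def
    by (intro continuous_intros continuous_on_B continuous_on_D continuous_on_r)
qed

lemma evolute_deriv:
  assumes "t \<in> I" "tau t \<noteq> 0" "((\<lambda>s. r' s / tau s) has_real_derivative d) (at t)"
  shows "(evolute \<xi> has_vector_derivative (r t * tau t + d) *\<^sub>R B t) (at t)"
proof -
  have "((\<lambda>s. \<xi> s + r s *\<^sub>R N s + (r' s / tau s) *\<^sub>R B s) has_vector_derivative
          T t + (r t *\<^sub>R ((- k t) *\<^sub>R T t + tau t *\<^sub>R B t) + r' t *\<^sub>R N t)
          + ((r' t / tau t) *\<^sub>R ((- tau t) *\<^sub>R N t) + d *\<^sub>R B t)) (at t)"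
    by (intro has_vector_derivative_add has_vector_derivative_scaleR
        xi_deriv r_deriv N_deriv B_deriv assms)
  moreover have "T t + (r t *\<^sub>R ((- k t) *\<^sub>R T t + tau t *\<^sub>R B t) + r' t *\<^sub>R N t)
          + ((r' t / tau t) *\<^sub>R ((- tau t) *\<^sub>R N t) + d *\<^sub>R B t) = (r t * tau t + d) *\<^sub>R B t"
    using k_pos[OF assms(1)] assms(2) by (simp add: r_def algebra_simps)
  ultimately have "((\<lambda>s. \<xi> s + r s *\<^sub>R N s + (r' s / tau s) *\<^sub>R B s) has_vector_derivative
      (r t * tau t + d) *\<^sub>R B t) (at t)"
    by simp
  then show ?thesis
    by (rule has_vector_derivative_transform_within_open[OF _ open_I assms(1)]) (simp add: evolute_eq)
qed

lemma torsion_eq_sign_mult_curvature: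
  assumes "\<forall>t\<in>I. k t = \<bar>tau t\<bar>"
  obtains \<epsilon> where "\<bar>\<epsilon>\<bar> = 1" "\<forall>t\<in>I. tau t = \<epsilon> * k t"
proof -
  have "continuous_on I (\<lambda>t. tau t / k t)"
    using k_pos by (intro continuous_intros continuous_on_tau continuous_on_k) force
  moreover have "\<forall>t\<in>I. \<bar>tau t / k t\<bar> = 1"
    using assms k_pos by (simp add: abs_divide)
  ultimately obtain \<epsilon> where "\<bar>\<epsilon>\<bar> = 1" "\<forall>t\<in>I. tau t / k t = \<epsilon>"
    using continuous_on_unit_valued_const[OF _ interval_I] by blast
  moreover have "tau t = \<epsilon> * k t" if "t \<in> I" for t
    using calculation(2) k_pos[OF that] that by (auto simp: field_simps)
  ultimately show ?thesis
    using that by blast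
qed

text \<open>This also follows from smoothness, but reading the coefficient off the congruence avoids
  differentiating its formula.\<close>
lemma binormal_coefficient_differentiable_if_congruent:
  assumes eq: "\<forall>t\<in>I. A *v \<xi> t + c = evolute \<xi> t" and t: "t \<in> I"
  shows "\<exists>d. ((\<lambda>s. r' s / tau s) has_real_derivative d) (at t)"
proof -
  have coefficient: "(A *v \<xi> s + c - \<xi> s - r s *\<^sub>R N s) \<bullet> B s = r' s / tau s" if "s \<in> I" for s
    using eq evolute_eq B_unit N_orth_B that by (simp add: inner_add_left)
  have "((\<lambda>s. (A *v \<xi> s + c - \<xi> s - r s *\<^sub>R N s) \<bullet> B s) has_real_derivative
      (A *v \<xi> t + c - \<xi> t - r t *\<^sub>R N t) \<bullet> ((- tau t) *\<^sub>R N t)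
      + (A *v T t + 0 - T t - (r t *\<^sub>R ((- k t) *\<^sub>R T t + tau t *\<^sub>R B t) + r' t *\<^sub>R N t)) \<bullet> B t)
      (at t)"
    by (intro has_real_derivative_inner has_vector_derivative_diff has_vector_derivative_add
        has_vector_derivative_matrix_vector_mult has_vector_derivative_const
        has_vector_derivative_scaleR xi_deriv r_deriv N_deriv B_deriv t)
  from has_field_derivative_transform_within_open[OF this open_I t coefficient] show ?thesis
    by blast
qed

lemma tangent_image_binormal_if_congruent:
  assumes tau_nz: "\<forall>t\<in>I. tau t \<noteq> 0" and A: "orthogonal_matrix A"
    and eq: "\<forall>t\<in>I. A *v \<xi> t + c = evolute \<xi> t"
  obtains \<sigma> where "\<bar>\<sigma>\<bar> = 1" "\<forall>t\<in>I. A *v T t = \<sigma> *\<^sub>R B t"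
    "\<forall>t\<in>I. ((\<lambda>s. r' s / tau s) has_real_derivative \<sigma> - r t * tau t) (at t)"
proof -
  obtain g' where g': "\<forall>t\<in>I. ((\<lambda>s. r' s / tau s) has_real_derivative g' t) (at t)"
    using bchoice[of I "\<lambda>t d. ((\<lambda>s. r' s / tau s) has_real_derivative d) (at t)"]
      binormal_coefficient_differentiable_if_congruent[OF eq] by blast
  have AT: "A *v T t = (r t * tau t + g' t) *\<^sub>R B t" if t: "t \<in> I" for t
  proof (rule has_vector_derivative_unique_on_open[OF open_I t])
    show "((\<lambda>s. A *v \<xi> s + c) has_vector_derivative A *v T t) (at t)"
      using has_vector_derivative_add[OF has_vector_derivative_matrix_vector_mult[OF xi_deriv[OF t]]
          has_vector_derivative_const[of c]]
      by simp
    show "(evolute \<xi> has_vector_derivative (r t * tau t + g' t) *\<^sub>R B t) (at t)"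
      using evolute_deriv[OF t] t tau_nz g' by blast
  qed (use eq in simp)
  define \<phi> where "\<phi> s = (A *v T s) \<bullet> B s" for s
  have "continuous_on I \<phi>"
    unfolding \<phi>_def T_def
    by (intro continuous_intros continuous_on_B continuous_on_D
        bounded_linear.continuous_on[OF matrix_vector_mul_bounded_linear])
  moreover have \<phi>: "\<phi> t = r t * tau t + g' t" "\<bar>\<phi> t\<bar> = 1" if t: "t \<in> I" for t
  proof -
    show "\<phi> t = r t * tau t + g' t"
      using AT[OF t] B_unit[OF t] by (simp add: \<phi>_def)
    moreover have "norm (A *v T t) = 1"
      using T_unit[OF t] by (simp add: orthogonal_matrix_norm[OF A] norm_eq_1)
    ultimately show "\<bar>\<phi> t\<bar> = 1"
      using AT[OF t] B_unit[OF t] by (simp add: norm_eq_1[symmetric])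
  qed
  ultimately obtain \<sigma> where "\<bar>\<sigma>\<bar> = 1" "\<forall>t\<in>I. \<phi> t = \<sigma>"
    using continuous_on_unit_valued_const[OF _ interval_I, of \<phi>] by blast
  then show ?thesis
    using that AT g' \<phi>(1) by (metis add_diff_cancel_left')
qed

lemma normal_image_if_tangent_image_binormal:
  assumes AT: "\<And>t. t \<in> I \<Longrightarrow> A *v T t = \<sigma> *\<^sub>R B t" and t: "t \<in> I"
  shows "A *v N t = (- \<sigma> * tau t / k t) *\<^sub>R N t"
proof -
  have "A *v (k t *\<^sub>R N t) = \<sigma> *\<^sub>R ((- tau t) *\<^sub>R N t)"
    using has_vector_derivative_unique_on_open[OF open_I t AT
        has_vector_derivative_matrix_vector_mult[OF T_deriv[OF t]]
        has_vector_derivative_const_scaleR[OF B_deriv[OF t]]] .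
  then have "k t *\<^sub>R (A *v N t) = (- \<sigma> * tau t) *\<^sub>R N t"
    by (simp add: matrix_vector_mult_scaleR)
  moreover have "A *v N t = (1 / k t) *\<^sub>R (k t *\<^sub>R (A *v N t))"
    using k_pos[OF t] by simp
  ultimately show ?thesis
    by simp
qed

lemma torsion_eq_if_tangent_image_binormal:
  assumes A: "rotation_matrix A" and \<sigma>: "\<bar>\<sigma>\<bar> = 1"
    and AT: "\<And>t. t \<in> I \<Longrightarrow> A *v T t = \<sigma> *\<^sub>R B t"
  shows "\<forall>t\<in>I. tau t = \<sigma> * k t"
proof -
  have AN: "A *v N t = (- \<sigma> * tau t / k t) *\<^sub>R N t" if "t \<in> I" for t
    using normal_image_if_tangent_image_binormal[of A \<sigma> t] AT that by blast
  have "k t = \<bar>tau t\<bar>" if t: "t \<in> I" for t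
  proof -
    have "1 = norm (A *v N t)"
      using A N_unit[OF t] by (simp add: rotation_matrix_def orthogonal_matrix_norm norm_eq_1)
    also have "\<dots> = \<bar>- \<sigma> * tau t / k t\<bar> * norm (N t)"
      unfolding AN[OF t] by (rule norm_scaleR)
    also have "\<dots> = \<bar>tau t\<bar> / k t"
      using \<sigma> N_unit[OF t] k_pos[OF t] by (simp add: abs_mult abs_divide norm_eq_1[symmetric])
    finally show ?thesis
      using k_pos[OF t] by (simp add: field_simps)
  qed
  then obtain \<epsilon> where \<epsilon>: "\<bar>\<epsilon>\<bar> = 1" and tau: "\<forall>t\<in>I. tau t = \<epsilon> * k t"
    using torsion_eq_sign_mult_curvature by blast
  have AN': "A *v N t = (- \<sigma> * \<epsilon>) *\<^sub>R N t" if t: "t \<in> I" for t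
    using AN[OF t] tau t k_pos[OF t] by simp
  have AB: "A *v B t = \<epsilon> *\<^sub>R T t" if t: "t \<in> I" for t
  proof -
    have "A *v B t = (\<sigma> *\<^sub>R B t) \<times> ((- \<sigma> * \<epsilon>) *\<^sub>R N t)"
      using AT[OF t] AN'[OF t] by (simp add: B_def cross_rotation_matrix[OF A, symmetric])
    also have "\<dots> = \<epsilon> *\<^sub>R T t"
      using B_cross_N[OF t] mult_self_eq_1_if_abs_eq_1[OF \<sigma>]
      by (simp add: cross_mult_left cross_mult_right)
    finally show ?thesis .
  qed
  show ?thesis
  proof
    fix t assume t: "t \<in> I"
    have "(\<sigma> * k t) *\<^sub>R N t = A *v ((- tau t) *\<^sub>R N t)"
      using AN'[OF t] tau t mult_self_eq_1_if_abs_eq_1[OF \<epsilon>]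
      by (simp add: matrix_vector_mult_scaleR matrix_vector_mult_minus mult.assoc[symmetric])
    also have "\<dots> = \<epsilon> *\<^sub>R (k t *\<^sub>R N t)"
      using has_vector_derivative_unique_on_open[OF open_I t AB
          has_vector_derivative_matrix_vector_mult[OF B_deriv[OF t]]
          has_vector_derivative_const_scaleR[OF T_deriv[OF t]]] .
    finally have "\<sigma> = \<epsilon>"
      using k_pos[OF t] N_unit[OF t] by auto
    then show "tau t = \<sigma> * k t"
      using tau t by simp
  qed
qed

lemma congruent_evolute_imp:
  assumes tau_nz: "\<forall>t\<in>I. tau t \<noteq> 0" and A: "rotation_matrix A"
    and eq: "\<forall>t\<in>I. A *v \<xi> t + c = evolute \<xi> t"
  shows "(\<forall>t\<in>I. k t = \<bar>tau t\<bar>) \<and> (\<exists>C. \<forall>t\<in>I. r t * r' t = C)"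
proof -
  obtain \<sigma> where \<sigma>: "\<bar>\<sigma>\<bar> = 1" and AT: "\<forall>t\<in>I. A *v T t = \<sigma> *\<^sub>R B t"
    and g': "\<forall>t\<in>I. ((\<lambda>s. r' s / tau s) has_real_derivative \<sigma> - r t * tau t) (at t)"
    using tangent_image_binormal_if_congruent[OF tau_nz _ eq] A
    by (auto simp: rotation_matrix_def)
  have tau: "\<forall>t\<in>I. tau t = \<sigma> * k t"
    using torsion_eq_if_tangent_image_binormal[OF A \<sigma>] AT by blast
  have "((\<lambda>s. r' s / tau s) has_real_derivative 0) (at t within I)" if "t \<in> I" for t
  proof -
    have "\<sigma> - r t * tau t = 0"
      using tau k_pos[OF that] that by (simp add: r_def)
    then show ?thesis
      using g' that by (metis has_field_derivative_at_within)
  qed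
  then obtain g0 where g0: "\<forall>t\<in>I. r' t / tau t = g0"
    using has_field_derivative_zero_constant[OF convex_I] by blast
  have "r t * r' t = g0 * \<sigma>" if "t \<in> I" for t
    using g0 tau k_pos[OF that] tau_nz that by (auto simp: r_def field_simps)
  moreover have "k t = \<bar>tau t\<bar>" if "t \<in> I" for t
    using tau \<sigma> k_pos[OF that] that by (simp add: abs_mult)
  ultimately show ?thesis
    by blast
qed

lemma evolute_deriv_if_radius_product_const:
  assumes \<epsilon>: "\<bar>\<epsilon>\<bar> = 1" and tau: "\<forall>t\<in>I. tau t = \<epsilon> * k t"
    and C: "\<forall>t\<in>I. r t * r' t = C" and t: "t \<in> I"
  shows "(evolute \<xi> has_vector_derivative \<epsilon> *\<^sub>R B t) (at t)"
proof -
  have coefficient: "r' s / tau s = \<epsilon> * C" if "s \<in> I" for s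
  proof -
    have "r' s = C * k s"
      using C k_pos[OF that] that by (auto simp: r_def field_simps)
    then show ?thesis
      using tau k_pos[OF that] \<epsilon> mult_self_eq_1_if_abs_eq_1[OF \<epsilon>] that
      by (auto simp: field_simps)
  qed
  have "((\<lambda>s. r' s / tau s) has_real_derivative 0) (at t)"
    by (rule has_field_derivative_transform_within_open[OF DERIV_const open_I t])
      (simp add: coefficient)
  from evolute_deriv[OF t _ this] show ?thesis
    using tau t k_pos[OF t] \<epsilon> by (auto simp: r_def)
qed

lemma frenet_frame_flip:
  assumes \<epsilon>: "\<bar>\<epsilon>\<bar> = 1" and tau: "\<forall>t\<in>I. tau t = \<epsilon> * k t"
  shows "frenet_frame_on I k tau (\<lambda>s. \<epsilon> *\<^sub>R B s) (\<lambda>s. - N s) (\<lambda>s. \<epsilon> *\<^sub>R T s)"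
  unfolding frenet_frame_on_def
proof
  fix t assume t: "t \<in> I"
  have \<epsilon>\<epsilon>: "\<epsilon> * (\<epsilon> * x) = x" for x
    using mult_self_eq_1_if_abs_eq_1[OF \<epsilon>] by (simp add: mult.assoc[symmetric])
  show "norm (\<epsilon> *\<^sub>R B t) = 1 \<and> norm (- N t) = 1 \<and> norm (\<epsilon> *\<^sub>R T t) = 1 \<and>
    ((\<lambda>s. \<epsilon> *\<^sub>R B s) has_vector_derivative k t *\<^sub>R - N t) (at t) \<and>
    ((\<lambda>s. - N s) has_vector_derivative (- k t) *\<^sub>R \<epsilon> *\<^sub>R B t + tau t *\<^sub>R \<epsilon> *\<^sub>R T t) (at t) \<and>
    ((\<lambda>s. \<epsilon> *\<^sub>R T s) has_vector_derivative (- tau t) *\<^sub>R - N t) (at t)"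
    using has_vector_derivative_const_scaleR[OF B_deriv[OF t], of \<epsilon>]
      has_vector_derivative_minus[OF N_deriv[OF t]]
      has_vector_derivative_const_scaleR[OF T_deriv[OF t], of \<epsilon>]
      T_unit[OF t] N_unit[OF t] B_unit[OF t] tau t \<epsilon>
    by (simp add: norm_eq_1[symmetric] algebra_simps \<epsilon>\<epsilon>)
qed

lemma rotation_onto_flipped_frame:
  assumes \<epsilon>: "\<bar>\<epsilon>\<bar> = 1" and t: "t \<in> I"
  obtains A where "rotation_matrix A"
    "A *v T t = \<epsilon> *\<^sub>R B t" "A *v N t = - N t" "A *v B t = \<epsilon> *\<^sub>R T t"
proof -
  have "(\<epsilon> *\<^sub>R B t) \<bullet> (\<epsilon> *\<^sub>R B t) = 1" "(- N t) \<bullet> (- N t) = 1" "(\<epsilon> *\<^sub>R B t) \<bullet> (- N t) = 0"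
    using B_unit[OF t] N_unit[OF t] N_orth_B[of t] mult_self_eq_1_if_abs_eq_1[OF \<epsilon>]
    by (simp_all add: inner_commute)
  then obtain A where "rotation_matrix A" "A *v T t = \<epsilon> *\<^sub>R B t" "A *v N t = - N t"
    "A *v (T t \<times> N t) = (\<epsilon> *\<^sub>R B t) \<times> (- N t)"
    using rotation_matrix_map_orthonormal_pair[OF T_unit[OF t] N_unit[OF t] T_orth_N[OF t]] by blast
  moreover from this(4) have "A *v B t = \<epsilon> *\<^sub>R T t"
    using B_cross_N[OF t] by (simp add: B_def cross_mult_left)
  ultimately show ?thesis
    using that by blast
qed

lemma congruent_evolute_if:
  assumes "I \<noteq> {}" and \<epsilon>: "\<bar>\<epsilon>\<bar> = 1" and tau: "\<forall>t\<in>I. tau t = \<epsilon> * k t"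
    and C: "\<forall>t\<in>I. r t * r' t = C"
  shows "\<exists>A c. rotation_matrix A \<and> (\<forall>t\<in>I. A *v \<xi> t + c = evolute \<xi> t)"
proof -
  obtain t0 where t0: "t0 \<in> I"
    using assms(1) by blast
  obtain A where A: "rotation_matrix A" "A *v T t0 = \<epsilon> *\<^sub>R B t0" "A *v N t0 = - N t0"
    "A *v B t0 = \<epsilon> *\<^sub>R T t0"
    using rotation_onto_flipped_frame[OF \<epsilon> t0] by blast
  have AT: "A *v T t = \<epsilon> *\<^sub>R B t" if "t \<in> I" for t
    using frenet_frame_on_unique[OF frenet_frame_on_orthogonal_image[OF _ frenet_frame]
        frenet_frame_flip[OF \<epsilon> tau] convex_I t0 _ _ _ that] A
    by (auto simp: rotation_matrix_def)
  have "((\<lambda>s. evolute \<xi> s - A *v \<xi> s) has_vector_derivative 0) (at t within I)" if t: "t \<in> I" for t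
    using has_vector_derivative_diff[OF evolute_deriv_if_radius_product_const[OF \<epsilon> tau C t]
        has_vector_derivative_matrix_vector_mult[where A = A, OF xi_deriv[OF t]]] AT[OF t]
    by (simp add: has_vector_derivative_at_within)
  then obtain c where c: "\<And>t. t \<in> I \<Longrightarrow> evolute \<xi> t - A *v \<xi> t = c"
    using has_vector_derivative_zero_constant[OF convex_I] by blast
  have "A *v \<xi> t + c = evolute \<xi> t" if "t \<in> I" for t
    using c[OF that] by (simp add: algebra_simps)
  then show ?thesis
    using A(1) by blast
qed

lemma congruent_evolute_iff:
  assumes "I \<noteq> {}" "\<forall>t\<in>I. tau t \<noteq> 0"
  shows "(\<exists>A c. rotation_matrix A \<and> (\<forall>t\<in>I. A *v \<xi> t + c = evolute \<xi> t)) \<longleftrightarrow>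
    (\<forall>t\<in>I. k t = \<bar>tau t\<bar>) \<and> (\<exists>C. \<forall>t\<in>I. r t * r' t = C)"
proof
  assume "\<exists>A c. rotation_matrix A \<and> (\<forall>t\<in>I. A *v \<xi> t + c = evolute \<xi> t)"
  then show "(\<forall>t\<in>I. k t = \<bar>tau t\<bar>) \<and> (\<exists>C. \<forall>t\<in>I. r t * r' t = C)"
    using congruent_evolute_imp[OF assms(2)] by blast
next
  assume "(\<forall>t\<in>I. k t = \<bar>tau t\<bar>) \<and> (\<exists>C. \<forall>t\<in>I. r t * r' t = C)"
  moreover from this obtain \<epsilon> where "\<bar>\<epsilon>\<bar> = 1" "\<forall>t\<in>I. tau t = \<epsilon> * k t"
    using torsion_eq_sign_mult_curvature by blast
  ultimately show "\<exists>A c. rotation_matrix A \<and> (\<forall>t\<in>I. A *v \<xi> t + c = evolute \<xi> t)"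
    using congruent_evolute_if[OF assms(1)] by blast
qed

lemma radius_square_affine_iff:
  "(\<exists>C. \<forall>t\<in>I. r t * r' t = C) \<longleftrightarrow> (\<exists>a b. \<forall>t\<in>I. (r t)\<^sup>2 = a * t + b)"
proof -
  have "((\<lambda>s. (r s)\<^sup>2) has_real_derivative 2 * (r t * r' t)) (at t)" if "t \<in> I" for t
    using DERIV_power[OF r_deriv[OF that], of 2] by (simp add: algebra_simps)
  from affine_iff_constant_derivative[OF open_I interval_I this]
  have "(\<exists>C. \<forall>t\<in>I. 2 * (r t * r' t) = C) \<longleftrightarrow> (\<exists>a b. \<forall>t\<in>I. (r t)\<^sup>2 = a * t + b)" .
  moreover have "(\<exists>C. \<forall>t\<in>I. 2 * (r t * r' t) = C) \<longleftrightarrow> (\<exists>C. \<forall>t\<in>I. r t * r' t = C)"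
  proof
    assume "\<exists>C. \<forall>t\<in>I. 2 * (r t * r' t) = C"
    then obtain C where "\<forall>t\<in>I. 2 * (r t * r' t) = C" ..
    then have "\<forall>t\<in>I. r t * r' t = C / 2" by auto
    then show "\<exists>C. \<forall>t\<in>I. r t * r' t = C" ..
  next
    assume "\<exists>C. \<forall>t\<in>I. r t * r' t = C"
    then obtain C where "\<forall>t\<in>I. r t * r' t = C" ..
    then have "\<forall>t\<in>I. 2 * (r t * r' t) = 2 * C" by auto
    then show "\<exists>C. \<forall>t\<in>I. 2 * (r t * r' t) = C" ..
  qed
  ultimately show ?thesis by simp
qed

end

section \<open>Curvatures with affine squared radius\<close>

lemma powr_minus_half_eq_iff:
  fixes \<kappa> c x :: real
  assumes "\<kappa> > 0" "c > 0" "x > 0"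
  shows "\<kappa> = c * x powr (-1/2) \<longleftrightarrow> (1 / \<kappa>)\<^sup>2 = x / c\<^sup>2"
proof -
  have "x powr (-1/2) = 1 / sqrt x"
    using powr_half_sqrt_powr[of x "-1"] assms(3) by (simp add: real_sqrt_divide)
  then have "\<kappa> = c * x powr (-1/2) \<longleftrightarrow> 1 / \<kappa> = sqrt x / c"
    using assms by (auto simp: field_simps)
  also have "\<dots> \<longleftrightarrow> (1 / \<kappa>)\<^sup>2 = (sqrt x / c)\<^sup>2"
    using assms by (simp add: power2_eq_iff_nonneg)
  also have "(sqrt x / c)\<^sup>2 = x / c\<^sup>2"
    using assms(3) by (simp add: power_divide)
  finally show ?thesis .
qed

lemma curvature_profile_if_inverse_square_affine:
  fixes k :: "real \<Rightarrow> real"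
  assumes k_pos: "\<forall>t\<in>I. k t > 0" and ab: "\<forall>t\<in>I. (1 / k t)\<^sup>2 = a * t + b"
  shows "(\<exists>k0. \<forall>t\<in>I. k t = k0) \<or>
    (\<exists>c>0. \<exists>t0. t0 \<notin> I \<and> (\<forall>t\<in>I. k t = c * \<bar>t - t0\<bar> powr (-1/2)))"
proof (cases "a = 0")
  case True
  have "k t = 1 / sqrt b" if "t \<in> I" for t
  proof -
    have "sqrt b = 1 / k t"
      using ab k_pos[rule_format, OF that] True that by (intro real_sqrt_unique) auto
    then show ?thesis
      by simp
  qed
  then show ?thesis by blast
next
  case False
  define t0 where "t0 = - b / a"
  have affine: "(1 / k t)\<^sup>2 = \<bar>a\<bar> * \<bar>t - t0\<bar>" "t \<noteq> t0" if "t \<in> I" for t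
  proof -
    have "(1 / k t)\<^sup>2 = a * (t - t0)"
      using ab that False by (simp add: t0_def field_simps)
    moreover have "(1 / k t)\<^sup>2 > 0"
      using k_pos[rule_format, OF that] by simp
    ultimately show "(1 / k t)\<^sup>2 = \<bar>a\<bar> * \<bar>t - t0\<bar>" "t \<noteq> t0"
      by (auto simp: abs_mult[symmetric])
  qed
  have "k t = (1 / sqrt \<bar>a\<bar>) * \<bar>t - t0\<bar> powr (-1/2)" if "t \<in> I" for t
    using affine[OF that] k_pos that False
    by (subst powr_minus_half_eq_iff) (auto simp: field_simps)
  moreover have "t0 \<notin> I"
    using affine by blast
  ultimately show ?thesis
    using False by (intro disjI2 exI[of _ "1 / sqrt \<bar>a\<bar>"] exI[of _ t0]) auto
qed

lemma inverse_square_affine_if_power_profile: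
  fixes k :: "real \<Rightarrow> real"
  assumes I: "is_interval I" and k_pos: "\<forall>t\<in>I. k t > 0"
    and c: "c > 0" "t0 \<notin> I" and kc: "\<forall>t\<in>I. k t = c * \<bar>t - t0\<bar> powr (-1/2)"
  shows "\<exists>a b. \<forall>t\<in>I. (1 / k t)\<^sup>2 = a * t + b"
proof -
  have "(\<forall>t\<in>I. t - t0 > 0) \<or> (\<forall>t\<in>I. t - t0 < 0)"
    using c(2) by (intro continuous_on_nonzero_sign_const[OF _ I]) (auto intro: continuous_intros)
  then obtain \<sigma> where \<sigma>: "\<forall>t\<in>I. \<bar>t - t0\<bar> = \<sigma> * (t - t0)"
  proof
    assume "\<forall>t\<in>I. t - t0 > 0"
    then have "\<forall>t\<in>I. \<bar>t - t0\<bar> = 1 * (t - t0)" by auto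
    then show ?thesis by (rule that)
  next
    assume "\<forall>t\<in>I. t - t0 < 0"
    then have "\<forall>t\<in>I. \<bar>t - t0\<bar> = -1 * (t - t0)" by auto
    then show ?thesis by (rule that)
  qed
  have "(1 / k t)\<^sup>2 = (\<sigma> / c\<^sup>2) * t + (- \<sigma> * t0 / c\<^sup>2)" if "t \<in> I" for t
  proof -
    have "(1 / k t)\<^sup>2 = \<bar>t - t0\<bar> / c\<^sup>2"
      using powr_minus_half_eq_iff[of "k t" c "\<bar>t - t0\<bar>"] kc k_pos c that by force
    then show ?thesis
      using \<sigma> c(1) that by (simp add: field_simps)
  qed
  then show ?thesis by blast
qed

lemma inverse_square_affine_iff:
  fixes k :: "real \<Rightarrow> real"
  assumes I: "is_interval I" and k_pos: "\<forall>t\<in>I. k t > 0"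
  shows "(\<exists>a b. \<forall>t\<in>I. (1 / k t)\<^sup>2 = a * t + b) \<longleftrightarrow>
    (\<exists>k0. \<forall>t\<in>I. k t = k0) \<or>
    (\<exists>c>0. \<exists>t0. t0 \<notin> I \<and> (\<forall>t\<in>I. k t = c * \<bar>t - t0\<bar> powr (-1/2)))"
proof (intro iffI; elim exE disjE conjE)
  fix a b assume "\<forall>t\<in>I. (1 / k t)\<^sup>2 = a * t + b"
  then show "(\<exists>k0. \<forall>t\<in>I. k t = k0) \<or>
    (\<exists>c>0. \<exists>t0. t0 \<notin> I \<and> (\<forall>t\<in>I. k t = c * \<bar>t - t0\<bar> powr (-1/2)))"
    by (rule curvature_profile_if_inverse_square_affine[OF k_pos])
next
  fix k0 assume "\<forall>t\<in>I. k t = k0"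
  then have "\<forall>t\<in>I. (1 / k t)\<^sup>2 = 0 * t + (1 / k0)\<^sup>2"
    by simp
  then show "\<exists>a b. \<forall>t\<in>I. (1 / k t)\<^sup>2 = a * t + b"
    by blast
next
  fix c t0 assume "c > 0" "t0 \<notin> I" "\<forall>t\<in>I. k t = c * \<bar>t - t0\<bar> powr (-1/2)"
  then show "\<exists>a b. \<forall>t\<in>I. (1 / k t)\<^sup>2 = a * t + b"
    by (rule inverse_square_affine_if_power_profile[OF I k_pos])
qed

theorem mainTheorem7:
  fixes \<xi> :: "real \<Rightarrow> real^3" and I :: "real set"
  assumes I_open: "open I" and I_interval: "is_interval I" and I_ne: "I \<noteq> {}"
    and smooth: "smooth_on I \<xi>"
    and arclength: "\<forall>t\<in>I. norm (vd \<xi> t) = 1"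
    and k_pos: "\<forall>t\<in>I. curvature \<xi> t > 0"
    and tau_nz: "\<forall>t\<in>I. torsion \<xi> t \<noteq> 0"
  shows "(\<exists>A :: real^3^3. \<exists>c :: real^3. rotation_matrix A \<and>
            (\<forall>t\<in>I. A *v \<xi> t + c = evolute \<xi> t))
     \<longleftrightarrow> ((\<forall>t\<in>I. curvature \<xi> t = \<bar>torsion \<xi> t\<bar>) \<and>
          ((\<exists>k0. \<forall>t\<in>I. curvature \<xi> t = k0) \<or>
           (\<exists>c>0. \<exists>t0. t0 \<notin> I \<and> (\<forall>t\<in>I. curvature \<xi> t = c * \<bar>t - t0\<bar> powr (-1/2)))))"
proof -
  obtain D where "D 0 = \<xi>" "\<And>m t. t \<in> I \<Longrightarrow> (D m has_vector_derivative D (Suc m) t) (at t)"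
    using smooth unfolding smooth_on_def by blast
  then interpret frenet_curve \<xi> I D
    using assms by unfold_locales auto
  have tau_nz': "\<forall>t\<in>I. tau t \<noteq> 0" and k_pos': "\<forall>t\<in>I. k t > 0"
    using tau_nz torsion_eq k_pos curvature_eq by auto
  have "(\<exists>A c. rotation_matrix A \<and> (\<forall>t\<in>I. A *v \<xi> t + c = evolute \<xi> t)) \<longleftrightarrow>
      (\<forall>t\<in>I. k t = \<bar>tau t\<bar>) \<and> (\<exists>a b. \<forall>t\<in>I. (1 / k t)\<^sup>2 = a * t + b)"
    using congruent_evolute_iff[OF I_ne tau_nz'] radius_square_affine_iff
    by (simp add: r_def)
  also have "\<dots> \<longleftrightarrow> (\<forall>t\<in>I. k t = \<bar>tau t\<bar>) \<and> ((\<exists>k0. \<forall>t\<in>I. k t = k0) \<or>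
      (\<exists>c>0. \<exists>t0. t0 \<notin> I \<and> (\<forall>t\<in>I. k t = c * \<bar>t - t0\<bar> powr (-1/2))))"
    by (simp only: inverse_square_affine_iff[OF I_interval k_pos'])
  finally show ?thesis
    using curvature_eq torsion_eq by (simp cong: ball_cong)
qed

end
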